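(* Let $n\geq 0$, $N\geq n$ and $k\geq 1$ be integers with $N+2>2(n+1)k$. Let $x_j=\cos\!\big((N+1-j)\pi/(N+2)\big)$ for $0\leq j\leq N$, let $D=\sqrt{2/(N+2)}\,\operatorname{diag}\!\big(\sqrt{1-x_0^2},\ldots,\sqrt{1-x_N^2}\big)$, and let $V\in\mathbb{R}^{(N+1)\times(N-n)}$ be the matrix $V=D\,W$ where $W_{i,j}=U_{n+1+j}(x_i)$ for $0\leq i\leq N$, $0\leq j\leq N-n-1$, with $U_\ell$ the Chebyshev polynomial of the second kind of degree $\ell$. Then $V^\top$ satisfies the restricted isometry property of order $k$ with constant $\delta_k=2(n+1)k/(N+2)$, i.e. \[ (1-\delta_k)\|\underline{z}\|_2^2\leq\|V^\top\underline{z}\|_2^2\leq(1+\delta_k)\|\underline{z}\|_2^2 \] for every $\underline{z}\in\mathbb{C}^{N+1}$ with at most $k$ nonzero entries.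
   Context: $U_\ell$ is the Chebyshev polynomial of the second kind of degree $\ell$, $U_\ell(\cos\theta)=\sin((\ell+1)\theta)/\sin\theta$. $\|\cdot\|_2$ is the Euclidean norm. Note that the hypothesis gives $0<\delta_k<1$. *)

theory Defs
  imports "HOL-Analysis.Analysis"
begin

fun chebyU :: "nat \<Rightarrow> real \<Rightarrow> real" where
  "chebyU 0 x = 1"
| "chebyU (Suc 0) x = 2 * x"
| "chebyU (Suc (Suc l)) x = 2 * x * chebyU (Suc l) x - chebyU l x"

definition cheb_node :: "nat \<Rightarrow> nat \<Rightarrow> real" where
  "cheb_node N j = cos ((real N + 1 - real j) * pi / (real N + 2))"

definition Vmat :: "nat \<Rightarrow> nat \<Rightarrow> nat \<Rightarrow> nat \<Rightarrow> real" where
  "Vmat N n i j = sqrt (2 / (real N + 2)) * sqrt (1 - (cheb_node N i)\<^sup>2)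
                   * chebyU (n + 1 + j) (cheb_node N i)"

end

theory Submission imports Defs begin

text \<open>With \<open>x\<^sub>i = cos \<theta>\<^sub>i\<close>, \<open>\<theta>\<^sub>i = (N+1-i)\<pi>/(N+2)\<close>, the identity
  \<open>U\<^sub>l(cos \<theta>) sin \<theta> = sin((l+1)\<theta>)\<close> shows that \<open>V\<close> consists of the columns \<open>l = n+2, \<dots>, N+1\<close>
  of the orthogonal sine matrix \<open>S\<^sub>i\<^sub>l = \<surd>(2/(N+2)) sin(l\<theta>\<^sub>i)\<close>, \<open>0 \<le> l \<le> N+1\<close>, whose column
  \<open>l = 0\<close> vanishes. By Parseval, \<open>\<parallel>V\<^sup>T z\<parallel>\<^sup>2\<close> is therefore \<open>\<parallel>z\<parallel>\<^sup>2\<close> minus the energy of \<open>z\<close> in the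
  \<open>n+1\<close> columns \<open>l = 1, \<dots>, n+1\<close>. Every entry of \<open>S\<close> is bounded by \<open>\<surd>(2/(N+2))\<close>, so by
  Cauchy-Schwarz on the at most \<open>k\<close> nonzero entries of \<open>z\<close> each of these columns carries
  energy at most \<open>2k\<parallel>z\<parallel>\<^sup>2/(N+2)\<close>, in total at most \<open>\<delta>\<^sub>k\<parallel>z\<parallel>\<^sup>2\<close>.\<close>

lemma chebyU_cos_mult_sin: "chebyU l (cos t) * sin t = sin (real (l + 1) * t)"
proof (induction l rule: induct_nat_012)
  case 0 then show ?case by simp
next
  case 1 then show ?case by (simp add: sin_double)
next
  case (ge2 l)
  have add: "sin (real (l + 3) * t) = sin (real (l + 2) * t + t)"
    and diff: "sin (real (l + 1) * t) = sin (real (l + 2) * t - t)"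
    by (simp_all add: algebra_simps)
  have "chebyU (Suc (Suc l)) (cos t) * sin t
      = 2 * cos t * (chebyU (Suc l) (cos t) * sin t) - chebyU l (cos t) * sin t"
    by (simp add: algebra_simps)
  also have "\<dots> = 2 * cos t * sin (real (l + 2) * t) - sin (real (l + 1) * t)"
    using ge2 by (simp add: add.commute)
  also have "\<dots> = sin (real (l + 3) * t)"
    unfolding add diff sin_add sin_diff by (simp add: algebra_simps)
  finally show ?case by (simp add: add.commute)
qed

lemma sum_cos_mult_pi_div:
  fixes M q :: nat
  assumes "0 < q" "q < 2 * M"
  shows "(\<Sum>l<M. cos (real l * (real q * pi / real M))) = (1 - (-1) ^ q) / 2"
proof -
  define x where "x = real q * pi / real M"
  have "0 < x / 2" "x / 2 < pi"
    using assms by (simp_all add: x_def field_simps)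
  then have sin_half: "sin (x / 2) \<noteq> 0"
    using sin_gt_zero by fastforce
  define f where "f l = sin ((real l - 1 / 2) * x)" for l :: nat
  have telescope: "2 * sin (x / 2) * cos (real l * x) = f (Suc l) - f l" for l
  proof -
    have "(real (Suc l) - 1 / 2) * x = real l * x + x / 2"
      and "(real l - 1 / 2) * x = real l * x - x / 2"
      by (simp_all add: algebra_simps)
    then show ?thesis
      unfolding f_def by (simp add: sin_add sin_diff algebra_simps)
  qed
  have "2 * sin (x / 2) * (\<Sum>l<M. cos (real l * x)) = f M - f 0"
    by (simp add: sum_distrib_left telescope sum_lessThan_telescope)
  also have "f M = sin (real q * pi - x / 2)"
    unfolding f_def using assms by (simp add: x_def field_simps)
  also have "\<dots> = - ((-1) ^ q) * sin (x / 2)"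
    by (simp add: sin_diff)
  also have "f 0 = - sin (x / 2)"
    by (simp add: f_def)
  finally have "sin (x / 2) * (2 * (\<Sum>l<M. cos (real l * x)) - (1 - (-1) ^ q)) = 0"
    by (simp add: algebra_simps)
  then show ?thesis
    using sin_half unfolding x_def[symmetric] by simp
qed

lemma sum_sin_mult_pi_div_orthogonal:
  fixes M m m' :: nat
  assumes "1 \<le> m" "m < M" "1 \<le> m'" "m' < M"
  shows "(\<Sum>l<M. sin (real l * (real m * pi / real M)) * sin (real l * (real m' * pi / real M)))
         = (if m = m' then real M / 2 else 0)"
proof -
  define d where "d = (if m' \<le> m then m - m' else m' - m)"
  define s where "s = m + m'"
  let ?a = "\<lambda>j l. real l * (real j * pi / real M)"
  have product_to_sum: "sin (?a m l) * sin (?a m' l) = (cos (?a d l) - cos (?a s l)) / 2" for l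
  proof -
    have "cos (?a d l) = cos (?a m l - ?a m' l)"
    proof (cases "m' \<le> m")
      case False
      then have "?a d l = - (?a m l - ?a m' l)"
        by (simp add: d_def of_nat_diff algebra_simps diff_divide_distrib)
      then show ?thesis by (simp only: cos_minus)
    qed (simp add: d_def of_nat_diff algebra_simps diff_divide_distrib)
    moreover have "cos (?a s l) = cos (?a m l + ?a m' l)"
      by (simp add: s_def algebra_simps add_divide_distrib)
    ultimately show ?thesis
      by (simp add: cos_add cos_diff)
  qed
  have sum_s: "(\<Sum>l<M. cos (?a s l)) = (1 - (-1) ^ s) / 2"
    by (rule sum_cos_mult_pi_div) (use assms in \<open>auto simp: s_def\<close>)
  have "(\<Sum>l<M. sin (?a m l) * sin (?a m' l))
      = ((\<Sum>l<M. cos (?a d l)) - (\<Sum>l<M. cos (?a s l))) / 2"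
    unfolding product_to_sum by (simp only: sum_divide_distrib[symmetric] sum_subtractf)
  also have "\<dots> = (if m = m' then real M / 2 else 0)"
  proof (cases "m = m'")
    case True
    then have "(-1::real) ^ s = 1"
      by (simp add: s_def flip: mult_2)
    then show ?thesis
      using True sum_s by (simp add: d_def)
  next
    case False
    have "(\<Sum>l<M. cos (?a d l)) = (1 - (-1) ^ d) / 2"
      by (rule sum_cos_mult_pi_div) (use assms False in \<open>auto simp: d_def\<close>)
    moreover have "even s = even d"
      using False by (auto simp: s_def d_def)
    then have "(-1::real) ^ s = (-1) ^ d"
      by (simp add: minus_one_power_iff)
    ultimately show ?thesis
      using False sum_s by simp
  qed
  finally show ?thesis .
qed

lemma sum_cmod_sum_sq_orthonormal:
  fixes a :: "'i \<Rightarrow> 'l \<Rightarrow> real" and z :: "'i \<Rightarrow> complex"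
  assumes "finite I" "finite L"
    and orthonormal: "\<And>i i'. i \<in> I \<Longrightarrow> i' \<in> I \<Longrightarrow>
      (\<Sum>l\<in>L. a i l * a i' l) = (if i = i' then 1 else 0)"
  shows "(\<Sum>l\<in>L. (cmod (\<Sum>i\<in>I. of_real (a i l) * z i))\<^sup>2) = (\<Sum>i\<in>I. (cmod (z i))\<^sup>2)"
proof -
  have "complex_of_real (\<Sum>l\<in>L. (cmod (\<Sum>i\<in>I. of_real (a i l) * z i))\<^sup>2)
      = (\<Sum>l\<in>L. (\<Sum>i\<in>I. of_real (a i l) * z i) * (\<Sum>i'\<in>I. of_real (a i' l) * cnj (z i')))"
    unfolding of_real_sum complex_norm_square cnj_sum complex_cnj_mult complex_cnj_complex_of_real ..
  also have "\<dots> = (\<Sum>l\<in>L. \<Sum>i\<in>I. \<Sum>i'\<in>I. of_real (a i l * a i' l) * (z i * cnj (z i')))"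
    by (simp add: sum_product algebra_simps)
  also have "\<dots> = (\<Sum>i\<in>I. \<Sum>i'\<in>I. \<Sum>l\<in>L. of_real (a i l * a i' l) * (z i * cnj (z i')))"
    by (subst sum.swap, rule sum.cong[OF refl], rule sum.swap)
  also have "\<dots> = (\<Sum>i\<in>I. \<Sum>i'\<in>I. of_real (\<Sum>l\<in>L. a i l * a i' l) * (z i * cnj (z i')))"
    by (simp add: sum_distrib_right)
  also have "\<dots> = (\<Sum>i\<in>I. \<Sum>i'\<in>I. if i = i' then z i * cnj (z i') else 0)"
    by (intro sum.cong refl) (simp add: orthonormal)
  also have "\<dots> = (\<Sum>i\<in>I. z i * cnj (z i))"
    using assms(1) by simp
  also have "\<dots> = complex_of_real (\<Sum>i\<in>I. (cmod (z i))\<^sup>2)"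
    unfolding of_real_sum complex_norm_square ..
  finally show ?thesis
    by (simp only: of_real_eq_iff)
qed

lemma cmod_sum_sq_le_sparse:
  fixes a :: "'i \<Rightarrow> real" and z :: "'i \<Rightarrow> complex"
  assumes "finite I" "\<And>i. i \<in> I \<Longrightarrow> \<bar>a i\<bar> \<le> c" "card {i \<in> I. z i \<noteq> 0} \<le> k"
  shows "(cmod (\<Sum>i\<in>I. of_real (a i) * z i))\<^sup>2 \<le> c\<^sup>2 * real k * (\<Sum>i\<in>I. (cmod (z i))\<^sup>2)"
proof -
  define A where "A = {i \<in> I. z i \<noteq> 0}"
  have "A \<subseteq> I" "finite A"
    using assms(1) by (auto simp: A_def)
  have "(\<Sum>i\<in>I. of_real (a i) * z i) = (\<Sum>i\<in>A. of_real (a i) * z i)"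
    by (rule sum.mono_neutral_right) (use assms(1) in \<open>auto simp: A_def\<close>)
  then have "cmod (\<Sum>i\<in>I. of_real (a i) * z i) \<le> (\<Sum>i\<in>A. \<bar>a i\<bar> * cmod (z i))"
    using norm_sum[of "\<lambda>i. of_real (a i) * z i" A] by (simp add: norm_mult)
  also have "\<dots> \<le> c * (\<Sum>i\<in>A. cmod (z i))"
    unfolding sum_distrib_left using assms(2) \<open>A \<subseteq> I\<close>
    by (intro sum_mono mult_right_mono) auto
  finally have "(cmod (\<Sum>i\<in>I. of_real (a i) * z i))\<^sup>2 \<le> c\<^sup>2 * (\<Sum>i\<in>A. cmod (z i))\<^sup>2"
    by (simp add: power_mono flip: power_mult_distrib)
  also have "\<dots> \<le> c\<^sup>2 * ((\<Sum>i\<in>A. (cmod (z i))\<^sup>2) * real (card A))"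
    by (intro mult_left_mono sum_squared_le_sum_of_squares) simp
  also have "\<dots> \<le> c\<^sup>2 * ((\<Sum>i\<in>I. (cmod (z i))\<^sup>2) * real k)"
    using assms(1,3) \<open>A \<subseteq> I\<close>
    by (intro mult_left_mono mult_mono sum_mono2) (auto simp: A_def sum_nonneg)
  finally show ?thesis
    by (simp add: algebra_simps)
qed

definition sine_basis :: "nat \<Rightarrow> nat \<Rightarrow> nat \<Rightarrow> real" where
  "sine_basis N i l = sqrt (2 / (real N + 2)) * sin (real l * (real (N + 1 - i) * pi / real (N + 2)))"

lemma Vmat_eq_sine_basis:
  assumes "i \<le> N"
  shows "Vmat N n i j = sine_basis N i (n + 2 + j)"
proof -
  define \<theta> where "\<theta> = real (N + 1 - i) * pi / real (N + 2)"
  have node: "cheb_node N i = cos \<theta>"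
    unfolding cheb_node_def \<theta>_def using assms by (simp add: of_nat_diff add_ac)
  have "0 \<le> \<theta>"
    by (simp add: \<theta>_def)
  moreover have "\<theta> \<le> pi"
    using assms by (simp add: \<theta>_def field_simps)
  ultimately have "sqrt (1 - (cos \<theta>)\<^sup>2) = sin \<theta>"
    by (simp add: sin_ge_zero flip: sin_squared_eq)
  then show ?thesis
    unfolding Vmat_def sine_basis_def node \<theta>_def[symmetric]
    using chebyU_cos_mult_sin[of "n + 1 + j" \<theta>] by (simp add: algebra_simps)
qed

lemma sine_basis_orthonormal:
  assumes "i \<le> N" "i' \<le> N"
  shows "(\<Sum>l<N + 2. sine_basis N i l * sine_basis N i' l) = (if i = i' then 1 else 0)"
proof -
  let ?s = "\<lambda>i l. sin (real l * (real (N + 1 - i) * pi / real (N + 2)))"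
  have "(\<Sum>l<N + 2. sine_basis N i l * sine_basis N i' l)
      = 2 / (real N + 2) * (\<Sum>l<N + 2. ?s i l * ?s i' l)"
    unfolding sine_basis_def sum_distrib_left
    by (intro sum.cong refl) (simp add: mult_ac, simp flip: mult.assoc)
  also have "\<dots> = 2 / (real N + 2) * (if N + 1 - i = N + 1 - i' then real (N + 2) / 2 else 0)"
    by (subst sum_sin_mult_pi_div_orthogonal) (use assms in auto)
  also have "\<dots> = (if i = i' then 1 else 0)"
    using assms by auto
  finally show ?thesis .
qed

lemma sum_low_frequencies_le:
  fixes z :: "nat \<Rightarrow> complex"
  assumes "card {i. i \<le> N \<and> z i \<noteq> 0} \<le> k"
  shows "(\<Sum>l<m + 1. (cmod (\<Sum>i\<le>N. of_real (sine_basis N i l) * z i))\<^sup>2)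
         \<le> real m * (2 / (real N + 2)) * real k * (\<Sum>i\<le>N. (cmod (z i))\<^sup>2)"
proof -
  have "(cmod (\<Sum>i\<le>N. of_real (sine_basis N i l) * z i))\<^sup>2
      \<le> (sqrt (2 / (real N + 2)))\<^sup>2 * real k * (\<Sum>i\<le>N. (cmod (z i))\<^sup>2)" for l
    using assms
    by (intro cmod_sum_sq_le_sparse) (auto simp: sine_basis_def abs_mult mult_left_le)
  then have "(\<Sum>l<m. (cmod (\<Sum>i\<le>N. of_real (sine_basis N i (Suc l)) * z i))\<^sup>2)
      \<le> real m * ((2 / (real N + 2)) * real k * (\<Sum>i\<le>N. (cmod (z i))\<^sup>2))"
    using sum_bounded_above[of "{..<m}" _ "2 / (real N + 2) * real k * (\<Sum>i\<le>N. (cmod (z i))\<^sup>2)"]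
    by simp
  then show ?thesis
    by (simp add: sum.lessThan_Suc_shift sine_basis_def del: sum.lessThan_Suc)
qed

lemma sum_Vmat_columns_eq:
  assumes "n \<le> N"
  shows "(\<Sum>j<N - n. (cmod (\<Sum>i\<le>N. of_real (Vmat N n i j) * z i))\<^sup>2)
         = (\<Sum>l\<in>{n + 2..<N + 2}. (cmod (\<Sum>i\<le>N. of_real (sine_basis N i l) * z i))\<^sup>2)"
  using assms sum.shift_bounds_nat_ivl[of "\<lambda>l. (cmod (\<Sum>i\<le>N. of_real (sine_basis N i l) * z i))\<^sup>2"
      0 "n + 2" "N - n"]
  by (simp add: Vmat_eq_sine_basis lessThan_atLeast0 add_ac)

theorem proposition2p2:
  fixes n N k :: nat and z :: "nat \<Rightarrow> complex"
  assumes "N \<ge> n" and "k \<ge> 1"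
    and "real N + 2 > 2 * (real n + 1) * real k"
    and "card {i. i \<le> N \<and> z i \<noteq> 0} \<le> k"
  defines "\<delta> \<equiv> 2 * (real n + 1) * real k / (real N + 2)"
  shows "(1 - \<delta>) * (\<Sum>i\<le>N. (cmod (z i))\<^sup>2)
           \<le> (\<Sum>j<N - n. (cmod (\<Sum>i\<le>N. complex_of_real (Vmat N n i j) * z i))\<^sup>2)
       \<and> (\<Sum>j<N - n. (cmod (\<Sum>i\<le>N. complex_of_real (Vmat N n i j) * z i))\<^sup>2)
           \<le> (1 + \<delta>) * (\<Sum>i\<le>N. (cmod (z i))\<^sup>2)"
proof -
  define g where "g l = (cmod (\<Sum>i\<le>N. of_real (sine_basis N i l) * z i))\<^sup>2" for l
  define Z where "Z = (\<Sum>i\<le>N. (cmod (z i))\<^sup>2)"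
  have "(\<Sum>l<N + 2. g l) = Z"
    unfolding g_def Z_def by (intro sum_cmod_sum_sq_orthonormal sine_basis_orthonormal) auto
  moreover have "(\<Sum>l<N + 2. g l) = (\<Sum>l<n + 2. g l) + (\<Sum>l\<in>{n + 2..<N + 2}. g l)"
    using \<open>N \<ge> n\<close> by (simp add: lessThan_atLeast0 sum.atLeastLessThan_concat del: sum.op_ivl_Suc)
  moreover have "(\<Sum>l<n + 2. g l) \<le> \<delta> * Z"
    using sum_low_frequencies_le[OF assms(4), of "n + 1"]
    by (simp add: g_def Z_def \<delta>_def field_simps)
  moreover have "0 \<le> (\<Sum>l<n + 2. g l)" "0 \<le> \<delta> * Z"
    by (simp_all add: g_def Z_def \<delta>_def sum_nonneg)
  ultimately show ?thesis
    unfolding sum_Vmat_columns_eq[OF \<open>N \<ge> n\<close>] g_def[symmetric] Z_def[symmetric]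
    by (simp add: algebra_simps)
qed

end
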